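(* Assume $\mathcal M$ satisfies extensibility. Let $\lambda\in\mathbb R^A$ with $\lambda>0$ such that $LP(\lambda)$ is feasible, and partition $A$ by equality of $\lambda_i$ into $S_1,\dots,S_d$ with $\lambda(S_1)<\dots<\lambda(S_d)$; set $T_g=\bigcup_{q=g}^dS_q$. (1) Every optimal solution $X$ of $LP(\lambda)$ is jointly optimal for $T_g$ for every $g\in[d]$, and for any two optimal solutions $X,Y$ of $LP(\lambda)$, $\mathrm{delay}_{S_g}(X)=\mathrm{delay}_{S_g}(Y)$ for all $g\in[d]$. (2) If $(\alpha,p)$ and $(\alpha',p')$ are optimal solutions of $DLP(\lambda)$ and, for some $g\in[d]$, $\sum_{i\in S_g,k}r_{ik}\alpha_{ik}=\sum_{i\in S_g,k}r_{ik}\alpha'_{ik}$, then $\mathrm{pay}_{S_g}(X,p)=\mathrm{pay}_{S_g}(X,p')$ for every optimal solution $X$ of $LP(\lambda)$. (3) If $X,X'$ are optimal solutions of $LP(\lambda)$, $(\alpha,p)$ is an optimal solution of $DLP(\lambda)$, $g\in[d]$ and $S\subseteq S_g$, then $\mathrm{delay}_S(X)\le\mathrm{delay}_S(X')$ implies $\mathrm{pay}_S(X,p)\ge\mathrm{pay}_S(X',p)$, and the first inequality is strict iff the second is strict.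
   Context: A market $\mathcal M$: finite agent set $A$, finite goods set $G$ (each of supply $1$), finite index set $C$; agent $i$ has real coefficients $a_{ijk}$, requirements $r_{ik}\ge0$, delays $d_{ij}\ge0$, budget $m_i>0$. CC$(i)$: $\sum_ja_{ijk}x_{ij}\ge r_{ik}$ for all $k$, $x_{ij}\ge0$. An allocation $X=(x_{ij})\ge0$ is supply respecting if $\sum_ix_{ij}\le1$ for all $j$. For $S\subseteq A$, $X$ is jointly optimal for $S$ if it satisfies CC$(i)$ for all $i\in S$, is supply respecting, and minimizes $\sum_{i\in S}\sum_jd_{ij}x_{ij}$ among allocations with these two properties. $\mathcal M$ satisfies extensibility if for every $S\subset A$, every $X$ jointly optimal for $S$, and every $i\in A\setminus S$, there is $X'$ jointly optimal for $S\cup\{i\}$ with $\sum_jd_{i'j}x'_{i'j}=\sum_jd_{i'j}x_{i'j}$ for all $i'\in S$. $LP(\lambda)$: minimize $\sum_i\lambda_i\sum_jd_{ij}x_{ij}$ s.t. $\sum_ja_{ijk}x_{ij}\ge r_{ik}$ for all $(i,k)$, $\sum_ix_{ij}\le1$ for all $j$, $x\ge0$. $DLP(\lambda)$: maximize $\sum_{i,k}r_{ik}\alpha_{ik}-\sum_jp_j$ s.t. $\lambda_id_{ij}\ge\sum_ka_{ijk}\alpha_{ik}-p_j$ for all $(i,j)$, $\alpha\ge0$, $p\ge0$. Notation: $\mathrm{delay}_S(X)=\sum_{i\in S}\sum_jd_{ij}x_{ij}$, $\mathrm{pay}_S(X,p)=\sum_{i\in S}\sum_jp_jx_{ij}$;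 $\lambda(S)$ denotes the common value of $\lambda_i$ for $i\in S$; $[d]=\{1,\dots,d\}$. *)

theory Defs
  imports Complex_Main
begin

text \<open>Allocations X :: agent => good => real; only values on A x G matter.\<close>

definition CC :: "'g set \<Rightarrow> 'c set \<Rightarrow> ('a \<Rightarrow> 'g \<Rightarrow> 'c \<Rightarrow> real) \<Rightarrow> ('a \<Rightarrow> 'c \<Rightarrow> real)
    \<Rightarrow> 'a \<Rightarrow> ('a \<Rightarrow> 'g \<Rightarrow> real) \<Rightarrow> bool" where
  "CC G C a r i X \<longleftrightarrow> (\<forall>k\<in>C. (\<Sum>j\<in>G. a i j k * X i j) \<ge> r i k) \<and> (\<forall>j\<in>G. X i j \<ge> 0)"

definition nonneg_alloc :: "'a set \<Rightarrow> 'g set \<Rightarrow> ('a \<Rightarrow> 'g \<Rightarrow> real) \<Rightarrow> bool" where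
  "nonneg_alloc A G X \<longleftrightarrow> (\<forall>i\<in>A. \<forall>j\<in>G. X i j \<ge> 0)"

definition supply_respecting :: "'a set \<Rightarrow> 'g set \<Rightarrow> ('a \<Rightarrow> 'g \<Rightarrow> real) \<Rightarrow> bool" where
  "supply_respecting A G X \<longleftrightarrow> (\<forall>j\<in>G. (\<Sum>i\<in>A. X i j) \<le> 1)"

definition delay :: "'g set \<Rightarrow> ('a \<Rightarrow> 'g \<Rightarrow> real) \<Rightarrow> 'a set \<Rightarrow> ('a \<Rightarrow> 'g \<Rightarrow> real) \<Rightarrow> real" where
  "delay G d S X = (\<Sum>i\<in>S. \<Sum>j\<in>G. d i j * X i j)"

definition pay :: "'g set \<Rightarrow> 'a set \<Rightarrow> ('a \<Rightarrow> 'g \<Rightarrow> real) \<Rightarrow> ('g \<Rightarrow> real) \<Rightarrow> real" where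
  "pay G S X p = (\<Sum>i\<in>S. \<Sum>j\<in>G. p j * X i j)"

definition admissible_for :: "'a set \<Rightarrow> 'g set \<Rightarrow> 'c set \<Rightarrow> ('a \<Rightarrow> 'g \<Rightarrow> 'c \<Rightarrow> real)
    \<Rightarrow> ('a \<Rightarrow> 'c \<Rightarrow> real) \<Rightarrow> 'a set \<Rightarrow> ('a \<Rightarrow> 'g \<Rightarrow> real) \<Rightarrow> bool" where
  "admissible_for A G C a r S X \<longleftrightarrow>
     nonneg_alloc A G X \<and> supply_respecting A G X \<and> (\<forall>i\<in>S. CC G C a r i X)"

definition jointly_optimal :: "'a set \<Rightarrow> 'g set \<Rightarrow> 'c set \<Rightarrow> ('a \<Rightarrow> 'g \<Rightarrow> 'c \<Rightarrow> real)
    \<Rightarrow> ('a \<Rightarrow> 'c \<Rightarrow> real) \<Rightarrow> ('a \<Rightarrow> 'g \<Rightarrow> real) \<Rightarrow> 'a set \<Rightarrow> ('a \<Rightarrow> 'g \<Rightarrow> real) \<Rightarrow> bool" where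
  "jointly_optimal A G C a r d S X \<longleftrightarrow>
     admissible_for A G C a r S X \<and>
     (\<forall>Y. admissible_for A G C a r S Y \<longrightarrow> delay G d S X \<le> delay G d S Y)"

definition extensibility :: "'a set \<Rightarrow> 'g set \<Rightarrow> 'c set \<Rightarrow> ('a \<Rightarrow> 'g \<Rightarrow> 'c \<Rightarrow> real)
    \<Rightarrow> ('a \<Rightarrow> 'c \<Rightarrow> real) \<Rightarrow> ('a \<Rightarrow> 'g \<Rightarrow> real) \<Rightarrow> bool" where
  "extensibility A G C a r d \<longleftrightarrow>
     (\<forall>S X i. S \<subset> A \<longrightarrow> jointly_optimal A G C a r d S X \<longrightarrow> i \<in> A - S \<longrightarrow>
        (\<exists>X'. jointly_optimal A G C a r d (insert i S) X' \<and>
              (\<forall>i'\<in>S. (\<Sum>j\<in>G. d i' j * X' i' j) = (\<Sum>j\<in>G. d i' j * X i' j))))"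

definition LP_feasible :: "'a set \<Rightarrow> 'g set \<Rightarrow> 'c set \<Rightarrow> ('a \<Rightarrow> 'g \<Rightarrow> 'c \<Rightarrow> real)
    \<Rightarrow> ('a \<Rightarrow> 'c \<Rightarrow> real) \<Rightarrow> ('a \<Rightarrow> 'g \<Rightarrow> real) \<Rightarrow> bool" where
  "LP_feasible A G C a r X \<longleftrightarrow> admissible_for A G C a r A X"

definition LP_obj :: "'a set \<Rightarrow> 'g set \<Rightarrow> ('a \<Rightarrow> 'g \<Rightarrow> real) \<Rightarrow> ('a \<Rightarrow> real)
    \<Rightarrow> ('a \<Rightarrow> 'g \<Rightarrow> real) \<Rightarrow> real" where
  "LP_obj A G d lam X = (\<Sum>i\<in>A. lam i * (\<Sum>j\<in>G. d i j * X i j))"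

definition LP_optimal :: "'a set \<Rightarrow> 'g set \<Rightarrow> 'c set \<Rightarrow> ('a \<Rightarrow> 'g \<Rightarrow> 'c \<Rightarrow> real)
    \<Rightarrow> ('a \<Rightarrow> 'c \<Rightarrow> real) \<Rightarrow> ('a \<Rightarrow> 'g \<Rightarrow> real) \<Rightarrow> ('a \<Rightarrow> real) \<Rightarrow> ('a \<Rightarrow> 'g \<Rightarrow> real) \<Rightarrow> bool" where
  "LP_optimal A G C a r d lam X \<longleftrightarrow>
     LP_feasible A G C a r X \<and>
     (\<forall>Y. LP_feasible A G C a r Y \<longrightarrow> LP_obj A G d lam X \<le> LP_obj A G d lam Y)"

definition DLP_feasible :: "'a set \<Rightarrow> 'g set \<Rightarrow> 'c set \<Rightarrow> ('a \<Rightarrow> 'g \<Rightarrow> 'c \<Rightarrow> real)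
    \<Rightarrow> ('a \<Rightarrow> 'g \<Rightarrow> real) \<Rightarrow> ('a \<Rightarrow> real) \<Rightarrow> ('a \<Rightarrow> 'c \<Rightarrow> real) \<Rightarrow> ('g \<Rightarrow> real) \<Rightarrow> bool" where
  "DLP_feasible A G C a d lam \<alpha> p \<longleftrightarrow>
     (\<forall>i\<in>A. \<forall>j\<in>G. lam i * d i j \<ge> (\<Sum>k\<in>C. a i j k * \<alpha> i k) - p j) \<and>
     (\<forall>i\<in>A. \<forall>k\<in>C. \<alpha> i k \<ge> 0) \<and> (\<forall>j\<in>G. p j \<ge> 0)"

definition DLP_obj :: "'a set \<Rightarrow> 'g set \<Rightarrow> 'c set \<Rightarrow> ('a \<Rightarrow> 'c \<Rightarrow> real)
    \<Rightarrow> ('a \<Rightarrow> 'c \<Rightarrow> real) \<Rightarrow> ('g \<Rightarrow> real) \<Rightarrow> real" where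
  "DLP_obj A G C r \<alpha> p = (\<Sum>i\<in>A. \<Sum>k\<in>C. r i k * \<alpha> i k) - (\<Sum>j\<in>G. p j)"

definition DLP_optimal :: "'a set \<Rightarrow> 'g set \<Rightarrow> 'c set \<Rightarrow> ('a \<Rightarrow> 'g \<Rightarrow> 'c \<Rightarrow> real)
    \<Rightarrow> ('a \<Rightarrow> 'c \<Rightarrow> real) \<Rightarrow> ('a \<Rightarrow> 'g \<Rightarrow> real) \<Rightarrow> ('a \<Rightarrow> real)
    \<Rightarrow> ('a \<Rightarrow> 'c \<Rightarrow> real) \<Rightarrow> ('g \<Rightarrow> real) \<Rightarrow> bool" where
  "DLP_optimal A G C a r d lam \<alpha> p \<longleftrightarrow>
     DLP_feasible A G C a d lam \<alpha> p \<and>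
     (\<forall>\<beta> q. DLP_feasible A G C a d lam \<beta> q \<longrightarrow> DLP_obj A G C r \<beta> q \<le> DLP_obj A G C r \<alpha> p)"

text \<open>Partition of A by equal lambda values, ordered increasingly:
  number of classes, g-th value (g in 1..d), class S_g, and T_g = union of S_q, q = g..d.\<close>
definition num_classes :: "'a set \<Rightarrow> ('a \<Rightarrow> real) \<Rightarrow> nat" where
  "num_classes A lam = card (lam ` A)"

definition class_value :: "'a set \<Rightarrow> ('a \<Rightarrow> real) \<Rightarrow> nat \<Rightarrow> real" where
  "class_value A lam g = sorted_list_of_set (lam ` A) ! (g - 1)"

definition class_set :: "'a set \<Rightarrow> ('a \<Rightarrow> real) \<Rightarrow> nat \<Rightarrow> 'a set" where
  "class_set A lam g = {i\<in>A. lam i = class_value A lam g}"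

definition upper_set :: "'a set \<Rightarrow> ('a \<Rightarrow> real) \<Rightarrow> nat \<Rightarrow> 'a set" where
  "upper_set A lam g = (\<Union>q\<in>{g..num_classes A lam}. class_set A lam q)"

end

theory Submission
  imports Defs
begin

text \<open>Adding the agents one at a time in order of decreasing \<open>\<lambda>\<close>, extensibility produces a
  feasible allocation \<open>Y\<close> that is jointly optimal for every upper level set \<open>{i. t \<le> \<lambda> i}\<close>.
  For an optimal solution \<open>X\<close> of LP(\<open>\<lambda>\<close>) each such level set therefore has delay at least that
  under \<open>Y\<close>, and Abel summation writes \<open>LP_obj X - LP_obj Y \<le> 0\<close> as a positive combination of
  these differences, so all of them vanish. This gives joint optimality on every \<open>T_g\<close>, and
  equal delays on \<open>S_g = T_g - T_(g+1)\<close>.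

  For the payments, LP duality (Farkas' lemma, proved by Fourier--Motzkin elimination) shows that
  an optimal dual solution \<open>(\<alpha>, p)\<close> closes the duality gap, and complementary slackness then gives
  \<open>pay_i = \<Sum>k. r i k * \<alpha> i k - \<lambda> i * delay_i\<close> for every agent \<open>i\<close>. On a class \<open>\<lambda>\<close> is
  constant and positive, so payment and delay are traded off linearly.\<close>

type_synonym 'v constraint = "('v \<Rightarrow> real) \<times> real"

definition solvable :: "'v set \<Rightarrow> 'v constraint set \<Rightarrow> bool" where
  "solvable V K \<longleftrightarrow> (\<exists>x. \<forall>\<kappa>\<in>K. snd \<kappa> \<le> (\<Sum>w\<in>V. fst \<kappa> w * x w))"

inductive conic_consequence :: "'v constraint set \<Rightarrow> 'v constraint \<Rightarrow> bool" for K where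
  base: "\<kappa> \<in> K \<Longrightarrow> conic_consequence K \<kappa>"
| comb: "conic_consequence K (f1, b1) \<Longrightarrow> conic_consequence K (f2, b2) \<Longrightarrow> c1 \<ge> 0 \<Longrightarrow> c2 \<ge> 0 \<Longrightarrow>
     conic_consequence K (\<lambda>w. c1 * f1 w + c2 * f2 w, c1 * b1 + c2 * b2)"

lemma conic_consequence_trans:
  assumes "conic_consequence K' \<kappa>" "\<And>\<kappa>'. \<kappa>' \<in> K' \<Longrightarrow> conic_consequence K \<kappa>'"
  shows "conic_consequence K \<kappa>"
  using assms by (induction rule: conic_consequence.induct) (auto intro: conic_consequence.comb)

lemma conic_consequence_coeff_zero:
  assumes "conic_consequence K \<kappa>" "\<And>\<kappa>'. \<kappa>' \<in> K \<Longrightarrow> fst \<kappa>' v = 0"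
  shows "fst \<kappa> v = 0"
  using assms by (induction rule: conic_consequence.induct) auto

lemma conic_consequence_imp_nonneg_combination:
  assumes "conic_consequence ((\<lambda>l. (F l, B l)) ` L) \<kappa>" "finite L"
  shows "\<exists>y. (\<forall>l\<in>L. y l \<ge> (0::real)) \<and> (\<forall>w. fst \<kappa> w = (\<Sum>l\<in>L. y l * F l w))
           \<and> snd \<kappa> = (\<Sum>l\<in>L. y l * B l)"
  using assms
proof (induction rule: conic_consequence.induct)
  case (base \<kappa>)
  then obtain l where "l \<in> L" "\<kappa> = (F l, B l)" by auto
  with base.prems show ?case
    by (intro exI[of _ "\<lambda>l'. if l' = l then 1 else 0"]) (simp add: if_distrib[of "\<lambda>c. c * _"] cong: if_cong)
next
  case (comb f1 b1 f2 b2 c1 c2)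
  then obtain y1 y2 where y1: "\<forall>l\<in>L. y1 l \<ge> 0" "\<forall>w. f1 w = (\<Sum>l\<in>L. y1 l * F l w)" "b1 = (\<Sum>l\<in>L. y1 l * B l)"
    and y2: "\<forall>l\<in>L. y2 l \<ge> 0" "\<forall>w. f2 w = (\<Sum>l\<in>L. y2 l * F l w)" "b2 = (\<Sum>l\<in>L. y2 l * B l)"
    by auto
  show ?case
    by (intro exI[of _ "\<lambda>l. c1 * y1 l + c2 * y2 l"])
       (use y1 y2 comb.hyps in \<open>auto simp: distrib_right sum.distrib sum_distrib_left mult.assoc\<close>)
qed

definition fm_elim :: "'v \<Rightarrow> 'v constraint set \<Rightarrow> 'v constraint set" where
  "fm_elim v K = {\<kappa>\<in>K. fst \<kappa> v = 0} \<union>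
     (\<lambda>(p, n). (\<lambda>w. - fst n v * fst p w + fst p v * fst n w, - fst n v * snd p + fst p v * snd n))
       ` ({\<kappa>\<in>K. fst \<kappa> v > 0} \<times> {\<kappa>\<in>K. fst \<kappa> v < 0})"

lemma finite_fm_elim: "finite K \<Longrightarrow> finite (fm_elim v K)"
  unfolding fm_elim_def by auto

lemma fm_elim_coeff_zero: "\<kappa> \<in> fm_elim v K \<Longrightarrow> fst \<kappa> v = 0"
  unfolding fm_elim_def by (auto simp: algebra_simps)

lemma conic_consequence_fm_elim:
  assumes "\<kappa> \<in> fm_elim v K"
  shows "conic_consequence K \<kappa>"
proof -
  have "conic_consequence K (\<lambda>w. - fn v * fp w + fp v * fn w, - fn v * bp + fp v * bn)"
    if "(fp, bp) \<in> K" "fp v > 0" "(fn, bn) \<in> K" "fn v < 0" for fp bp fn bn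
    using that by (intro conic_consequence.comb) (auto intro: conic_consequence.base)
  with assms show ?thesis
    unfolding fm_elim_def by (auto intro: conic_consequence.base)
qed

lemma fm_elim_bounds_compatible:
  assumes x: "\<forall>\<kappa>\<in>fm_elim v K. snd \<kappa> \<le> (\<Sum>w\<in>V. fst \<kappa> w * x w)"
    and p: "p \<in> K" "fst p v > 0" and n: "n \<in> K" "fst n v < 0"
  shows "(snd p - (\<Sum>w\<in>V. fst p w * x w)) / fst p v \<le> (snd n - (\<Sum>w\<in>V. fst n w * x w)) / fst n v"
proof -
  let ?s = "\<lambda>\<kappa>. \<Sum>w\<in>V. fst \<kappa> w * x w"
  have "(\<lambda>w. - fst n v * fst p w + fst p v * fst n w, - fst n v * snd p + fst p v * snd n) \<in> fm_elim v K"
    using p n unfolding fm_elim_def by force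
  with x have "- fst n v * snd p + fst p v * snd n \<le> (\<Sum>w\<in>V. (- fst n v * fst p w + fst p v * fst n w) * x w)"
    by auto
  also have "\<dots> = - fst n v * ?s p + fst p v * ?s n"
    by (simp add: sum_distrib_left sum.distrib[symmetric] algebra_simps)
  finally have "(snd p - ?s p) * fst n v \<ge> (snd n - ?s n) * fst p v"
    by (simp add: algebra_simps)
  with p n show ?thesis by (simp add: divide_simps mult.commute)
qed

lemma finite_sets_separated:
  fixes Lo Up :: "real set"
  assumes "finite Lo" "finite Up" "\<forall>l\<in>Lo. \<forall>u\<in>Up. l \<le> u"
  obtains t where "\<forall>l\<in>Lo. l \<le> t" "\<forall>u\<in>Up. t \<le> u"
proof (cases "Lo = {}")
  case True
  show ?thesis by (rule that[of "if Up = {} then 0 else Min Up"]) (use True assms(2) in auto)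
next
  case False
  show ?thesis by (rule that[of "Max Lo"]) (use False assms in auto)
qed

lemma solvable_fm_elim_imp_solvable:
  assumes V: "finite V" and K: "finite K" and v: "v \<notin> V" and sol: "solvable V (fm_elim v K)"
  shows "solvable (insert v V) K"
proof -
  obtain x where x: "\<forall>\<kappa>\<in>fm_elim v K. snd \<kappa> \<le> (\<Sum>w\<in>V. fst \<kappa> w * x w)"
    using sol unfolding solvable_def by blast
  define s where "s \<kappa> = (\<Sum>w\<in>V. fst \<kappa> w * x w)" for \<kappa> :: "'a constraint"
  define bound where "bound \<kappa> = (snd \<kappa> - s \<kappa>) / fst \<kappa> v" for \<kappa>
  \<comment> \<open>positive coefficients at \<open>v\<close> give lower bounds for the new value of \<open>x v\<close>, negative ones upper bounds\<close>
  obtain t where t_lower: "\<forall>p\<in>{\<kappa>\<in>K. fst \<kappa> v > 0}. bound p \<le> t"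
    and t_upper: "\<forall>n\<in>{\<kappa>\<in>K. fst \<kappa> v < 0}. t \<le> bound n"
  proof (rule finite_sets_separated[of "bound ` {\<kappa>\<in>K. fst \<kappa> v > 0}" "bound ` {\<kappa>\<in>K. fst \<kappa> v < 0}"])
    show "\<forall>l\<in>bound ` {\<kappa>\<in>K. fst \<kappa> v > 0}. \<forall>u\<in>bound ` {\<kappa>\<in>K. fst \<kappa> v < 0}. l \<le> u"
      using fm_elim_bounds_compatible[OF x] unfolding bound_def s_def by blast
  qed (use K that in auto)
  have lhs: "(\<Sum>w\<in>insert v V. fst \<kappa> w * (x(v := t)) w) = fst \<kappa> v * t + s \<kappa>" for \<kappa>
  proof -
    have "(\<Sum>w\<in>V. fst \<kappa> w * (x(v := t)) w) = s \<kappa>"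
      unfolding s_def using v by (intro sum.cong) auto
    with V v show ?thesis by simp
  qed
  have "snd \<kappa> \<le> fst \<kappa> v * t + s \<kappa>" if "\<kappa> \<in> K" for \<kappa>
  proof (cases "fst \<kappa> v" "0 :: real" rule: linorder_cases)
    case less
    with that t_upper have "t \<le> bound \<kappa>" by blast
    with less have "snd \<kappa> - s \<kappa> \<le> t * fst \<kappa> v" unfolding bound_def by (simp add: neg_le_divide_eq)
    then show ?thesis by (simp add: algebra_simps)
  next
    case equal
    with that have "\<kappa> \<in> fm_elim v K" unfolding fm_elim_def by auto
    with x equal show ?thesis unfolding s_def by simp
  next
    case greater
    with that t_lower have "bound \<kappa> \<le> t" by blast
    with greater have "snd \<kappa> - s \<kappa> \<le> t * fst \<kappa> v" unfolding bound_def by (simp add: pos_divide_le_eq)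
    then show ?thesis by (simp add: algebra_simps)
  qed
  then show ?thesis unfolding solvable_def by (intro exI[of _ "x(v := t)"]) (unfold lhs, blast)
qed

lemma fourier_motzkin:
  assumes "finite V" "finite K" "\<not> solvable V K"
  shows "\<exists>f b. conic_consequence K (f, b) \<and> (\<forall>v\<in>V. f v = 0) \<and> b > 0"
  using assms
proof (induction V arbitrary: K rule: finite_induct)
  case empty
  then obtain \<kappa> where "\<kappa> \<in> K" "snd \<kappa> > 0" unfolding solvable_def by (auto simp: not_le)
  then show ?case by (intro exI[of _ "fst \<kappa>"] exI[of _ "snd \<kappa>"]) (auto intro: conic_consequence.base)
next
  case (insert v V)
  have "\<not> solvable V (fm_elim v K)"
    using solvable_fm_elim_imp_solvable[OF insert.hyps(1) insert.prems(1) insert.hyps(2)] insert.prems(2)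
    by blast
  with insert.IH[OF finite_fm_elim[OF insert.prems(1)]] obtain f b
    where fb: "conic_consequence (fm_elim v K) (f, b)" "\<forall>v\<in>V. f v = 0" "b > 0"
    by blast
  have "conic_consequence K (f, b)"
    using conic_consequence_trans[OF fb(1) conic_consequence_fm_elim] .
  moreover have "f v = 0"
    using conic_consequence_coeff_zero[OF fb(1) fm_elim_coeff_zero] by simp
  ultimately show ?case using fb by auto
qed

lemma farkas_lemma:
  fixes F :: "'l \<Rightarrow> 'v \<Rightarrow> real" and B :: "'l \<Rightarrow> real"
  assumes "finite V" "finite L" "\<not> (\<exists>x. \<forall>l\<in>L. (\<Sum>v\<in>V. F l v * x v) \<ge> B l)"
  shows "\<exists>y. (\<forall>l\<in>L. y l \<ge> 0) \<and> (\<forall>v\<in>V. (\<Sum>l\<in>L. y l * F l v) = 0) \<and> (\<Sum>l\<in>L. y l * B l) > 0"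
proof -
  let ?K = "(\<lambda>l. (F l, B l)) ` L"
  have "\<not> solvable V ?K" using assms(3) unfolding solvable_def by auto
  with fourier_motzkin assms(1,2) obtain f b where
    fb: "conic_consequence ?K (f, b)" "\<forall>v\<in>V. f v = 0" "b > 0"
    by blast
  from conic_consequence_imp_nonneg_combination[OF fb(1) assms(2)] obtain y where
    "\<forall>l\<in>L. y l \<ge> 0" "\<forall>w. f w = (\<Sum>l\<in>L. y l * F l w)" "b = (\<Sum>l\<in>L. y l * B l)"
    by auto
  with fb show ?thesis by (intro exI[of _ y]) auto
qed

lemma weak_duality:
  assumes "\<forall>l\<in>L. y l \<ge> (0::real)" "\<forall>l\<in>L. (\<Sum>v\<in>V. F l v * x v) \<ge> B l"
  shows "(\<Sum>l\<in>L. y l * B l) \<le> (\<Sum>v\<in>V. (\<Sum>l\<in>L. y l * F l v) * x v)"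
proof -
  have "(\<Sum>l\<in>L. y l * B l) \<le> (\<Sum>l\<in>L. y l * (\<Sum>v\<in>V. F l v * x v))"
    using assms by (intro sum_mono mult_left_mono) auto
  also have "\<dots> = (\<Sum>v\<in>V. (\<Sum>l\<in>L. y l * F l v) * x v)"
    by (simp add: sum_distrib_left sum_distrib_right mult.assoc sum.swap[of _ L])
  finally show ?thesis .
qed

text \<open>Farkas' lemma applied to the system extended by the row \<open>- c x \<ge> \<epsilon> - \<gamma>\<close>, which the lower
  bound \<open>\<gamma>\<close> makes infeasible.\<close>
lemma farkas_objective_row:
  fixes F :: "'l \<Rightarrow> 'v \<Rightarrow> real" and B :: "'l \<Rightarrow> real"
  assumes "finite V" "finite L"
    and bound: "\<And>x. \<forall>l\<in>L. (\<Sum>v\<in>V. F l v * x v) \<ge> B l \<Longrightarrow> (\<Sum>v\<in>V. c v * x v) \<ge> \<gamma>"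
    and eps: "\<epsilon> > 0"
  shows "\<exists>y y0. y0 \<ge> 0 \<and> (\<forall>l\<in>L. y l \<ge> 0) \<and> (\<forall>v\<in>V. (\<Sum>l\<in>L. y l * F l v) = y0 * c v) \<and>
           (\<Sum>l\<in>L. y l * B l) > y0 * (\<gamma> - \<epsilon>)"
proof -
  define L' where "L' = insert None (Some ` L)"
  define F' where "F' = (\<lambda>l v. case l of None \<Rightarrow> - c v | Some l \<Rightarrow> F l v)"
  define B' where "B' = (\<lambda>l. case l of None \<Rightarrow> \<epsilon> - \<gamma> | Some l \<Rightarrow> B l)"
  have sum_L': "(\<Sum>l\<in>L'. h l) = h None + (\<Sum>l\<in>L. h (Some l))" for h :: "_ \<Rightarrow> real"
    unfolding L'_def using assms(2) by (simp add: sum.reindex)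
  have "\<not> (\<exists>x. \<forall>l\<in>L'. (\<Sum>v\<in>V. F' l v * x v) \<ge> B' l)"
  proof
    assume "\<exists>x. \<forall>l\<in>L'. (\<Sum>v\<in>V. F' l v * x v) \<ge> B' l"
    then obtain x where x: "\<forall>l\<in>L'. (\<Sum>v\<in>V. F' l v * x v) \<ge> B' l" by blast
    then have "\<forall>l\<in>L. (\<Sum>v\<in>V. F l v * x v) \<ge> B l"
      unfolding L'_def F'_def B'_def by auto
    from bound[OF this] have "(\<Sum>v\<in>V. c v * x v) \<ge> \<gamma>" .
    moreover have "(\<Sum>v\<in>V. - c v * x v) \<ge> \<epsilon> - \<gamma>"
      using x unfolding L'_def F'_def B'_def by auto
    ultimately show False using eps by (simp add: sum_negf)
  qed
  from farkas_lemma[OF assms(1) _ this] obtain y where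
    y: "\<forall>l\<in>L'. y l \<ge> 0" "\<forall>v\<in>V. (\<Sum>l\<in>L'. y l * F' l v) = 0" "(\<Sum>l\<in>L'. y l * B' l) > 0"
    using assms(2) unfolding L'_def by blast
  show ?thesis
  proof (intro exI[of _ "\<lambda>l. y (Some l)"] exI[of _ "y None"] conjI ballI)
    show "y None \<ge> 0"
      using y(1) unfolding L'_def by auto
    show "y (Some l) \<ge> 0" if "l \<in> L" for l
      using y(1) that unfolding L'_def by auto
    show "(\<Sum>l\<in>L. y (Some l) * F l v) = y None * c v" if "v \<in> V" for v
      using y(2) that unfolding sum_L' F'_def by auto
    show "(\<Sum>l\<in>L. y (Some l) * B l) > y None * (\<gamma> - \<epsilon>)"
      using y(3) unfolding sum_L' B'_def by (auto simp: algebra_simps)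
  qed
qed

lemma lower_bound_certificate:
  fixes F :: "'l \<Rightarrow> 'v \<Rightarrow> real" and B :: "'l \<Rightarrow> real"
  assumes fin: "finite V" "finite L" and x0: "\<forall>l\<in>L. (\<Sum>v\<in>V. F l v * x0 v) \<ge> B l"
    and bound: "\<And>x. \<forall>l\<in>L. (\<Sum>v\<in>V. F l v * x v) \<ge> B l \<Longrightarrow> (\<Sum>v\<in>V. c v * x v) \<ge> \<gamma>"
    and eps: "\<epsilon> > 0"
  shows "\<exists>y. (\<forall>l\<in>L. y l \<ge> 0) \<and> (\<forall>v\<in>V. (\<Sum>l\<in>L. y l * F l v) = c v) \<and> (\<Sum>l\<in>L. y l * B l) > \<gamma> - \<epsilon>"
proof -
  obtain y y0 where y0: "y0 \<ge> 0" and y: "\<forall>l\<in>L. y l \<ge> 0"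
    and coeff: "\<forall>v\<in>V. (\<Sum>l\<in>L. y l * F l v) = y0 * c v" and obj: "(\<Sum>l\<in>L. y l * B l) > y0 * (\<gamma> - \<epsilon>)"
    using farkas_objective_row[OF fin bound eps] by blast
  \<comment> \<open>\<open>y0 = 0\<close> would make \<open>y\<close> a Farkas certificate for the infeasibility of the system \<open>x0\<close> solves\<close>
  have "y0 \<noteq> 0"
  proof
    assume "y0 = 0"
    then have "(\<Sum>v\<in>V. (\<Sum>l\<in>L. y l * F l v) * x0 v) = 0" using coeff by simp
    with weak_duality[OF y x0] obj \<open>y0 = 0\<close> show False by simp
  qed
  with y0 have "y0 > 0" by simp
  show ?thesis
  proof (intro exI[of _ "\<lambda>l. y l / y0"] conjI ballI)
    show "y l / y0 \<ge> 0" if "l \<in> L" for l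
      using that y \<open>y0 > 0\<close> by simp
    show "(\<Sum>l\<in>L. y l / y0 * F l v) = c v" if "v \<in> V" for v
      using coeff that \<open>y0 > 0\<close> by (simp add: sum_divide_distrib[symmetric])
    show "(\<Sum>l\<in>L. y l / y0 * B l) > \<gamma> - \<epsilon>"
      using obj \<open>y0 > 0\<close> by (simp add: sum_divide_distrib[symmetric] pos_less_divide_eq mult.commute)
  qed
qed

definition lp_rows :: "'a set \<Rightarrow> 'g set \<Rightarrow> 'c set \<Rightarrow> (('a \<times> 'c) + ('a \<times> 'g) + 'g) set" where
  "lp_rows A G C = (A \<times> C) <+> ((A \<times> G) <+> G)"

text \<open>LP(\<open>\<lambda>\<close>) as a system \<open>F x \<ge> B\<close> in the variables \<open>A \<times> G\<close>: the covering constraints \<open>(i, k)\<close>,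
  the sign constraints \<open>x i j \<ge> 0\<close> and the supply constraints \<open>- \<Sum>i. x i j \<ge> -1\<close>.\<close>
fun lp_coeff :: "('a \<Rightarrow> 'g \<Rightarrow> 'c \<Rightarrow> real) \<Rightarrow> ('a \<times> 'c) + ('a \<times> 'g) + 'g \<Rightarrow> 'a \<times> 'g \<Rightarrow> real" where
  "lp_coeff a (Inl (i, k)) (i', j) = (if i' = i then a i j k else 0)"
| "lp_coeff a (Inr (Inl (i, j))) (i', j') = (if i' = i \<and> j' = j then 1 else 0)"
| "lp_coeff a (Inr (Inr j)) (i', j') = (if j' = j then -1 else 0)"

fun lp_rhs :: "('a \<Rightarrow> 'c \<Rightarrow> real) \<Rightarrow> ('a \<times> 'c) + ('a \<times> 'g) + 'g \<Rightarrow> real" where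
  "lp_rhs r (Inl (i, k)) = r i k"
| "lp_rhs r (Inr (Inl _)) = 0"
| "lp_rhs r (Inr (Inr _)) = -1"

lemma sum_lp_rows:
  assumes "finite A" "finite G" "finite C"
  shows "(\<Sum>l\<in>lp_rows A G C. h l) =
    (\<Sum>i\<in>A. \<Sum>k\<in>C. h (Inl (i, k))) + (\<Sum>i\<in>A. \<Sum>j\<in>G. h (Inr (Inl (i, j)))) + (\<Sum>j\<in>G. h (Inr (Inr j)))"
  using assms by (simp add: lp_rows_def sum.Plus sum.cartesian_product add.assoc)

context
  fixes A :: "'a set" and G :: "'g set"
  assumes fin: "finite A" "finite G"
begin

lemma lp_row_demand: "i \<in> A \<Longrightarrow> (\<Sum>v\<in>A \<times> G. lp_coeff a (Inl (i, k)) v * x v) = (\<Sum>j\<in>G. a i j k * x (i, j))"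
  using fin unfolding sum.cartesian_product'
  by (subst sum.swap) (simp add: if_distrib[of "\<lambda>c. c * _"] sum.delta cong: if_cong)

lemma lp_row_sign: "i \<in> A \<Longrightarrow> j \<in> G \<Longrightarrow> (\<Sum>v\<in>A \<times> G. lp_coeff a (Inr (Inl (i, j))) v * x v) = x (i, j)"
  using fin unfolding sum.cartesian_product'
  by (subst sum.swap) (simp add: if_distrib[of "\<lambda>c. c * _"] sum.delta if_if_eq_conj[symmetric] cong: if_cong)

lemma lp_row_supply: "j \<in> G \<Longrightarrow> (\<Sum>v\<in>A \<times> G. lp_coeff a (Inr (Inr j)) v * x v) = - (\<Sum>i\<in>A. x (i, j))"
  using fin unfolding sum.cartesian_product'
  by (simp add: if_distrib[of "\<lambda>c. c * _"] sum.delta sum_negf cong: if_cong)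

end

lemma lp_coeff_column:
  assumes "finite A" "finite G" "finite C" "i \<in> A" "j \<in> G"
  shows "(\<Sum>l\<in>lp_rows A G C. y l * lp_coeff a l (i, j)) =
     (\<Sum>k\<in>C. y (Inl (i, k)) * a i j k) + y (Inr (Inl (i, j))) - y (Inr (Inr j))"
proof -
  have "(\<Sum>i'\<in>A. \<Sum>k\<in>C. y (Inl (i', k)) * lp_coeff a (Inl (i', k)) (i, j)) = (\<Sum>k\<in>C. y (Inl (i, k)) * a i j k)"
    "(\<Sum>i'\<in>A. \<Sum>j'\<in>G. y (Inr (Inl (i', j'))) * lp_coeff a (Inr (Inl (i', j'))) (i, j)) = y (Inr (Inl (i, j)))"
    using assms
    by (subst sum.swap; simp add: if_distrib[of "\<lambda>c. _ * c"] sum.delta' if_if_eq_conj[symmetric] cong: if_cong)+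
  moreover have "(\<Sum>j'\<in>G. y (Inr (Inr j')) * lp_coeff a (Inr (Inr j')) (i, j)) = - y (Inr (Inr j))"
    using assms by (simp add: if_distrib[of "\<lambda>c. _ * c"] sum.delta' cong: if_cong)
  ultimately show ?thesis using assms by (simp add: sum_lp_rows)
qed

lemma lp_rhs_combination:
  assumes "finite A" "finite G" "finite C"
  shows "(\<Sum>l\<in>lp_rows A G C. y l * lp_rhs r l) =
     (\<Sum>i\<in>A. \<Sum>k\<in>C. r i k * y (Inl (i, k))) - (\<Sum>j\<in>G. y (Inr (Inr j)))"
  using assms by (simp add: sum_lp_rows sum_negf mult.commute)

lemma lp_system_iff_LP_feasible:
  assumes fin: "finite A" "finite G" "finite C"
  shows "(\<forall>l\<in>lp_rows A G C. (\<Sum>v\<in>A \<times> G. lp_coeff a l v * x v) \<ge> lp_rhs r l)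
     \<longleftrightarrow> LP_feasible A G C a r (\<lambda>i j. x (i, j))" (is "?system \<longleftrightarrow> _")
proof
  assume sys: ?system
  have "r i k \<le> (\<Sum>j\<in>G. a i j k * x (i, j))" if "i \<in> A" "k \<in> C" for i k
    using sys[rule_format, of "Inl (i, k)"] that fin by (simp add: lp_rows_def Plus_def lp_row_demand)
  moreover have "0 \<le> x (i, j)" if "i \<in> A" "j \<in> G" for i j
    using sys[rule_format, of "Inr (Inl (i, j))"] that fin by (simp add: lp_rows_def Plus_def lp_row_sign)
  moreover have "(\<Sum>i\<in>A. x (i, j)) \<le> 1" if "j \<in> G" for j
    using sys[rule_format, of "Inr (Inr j)"] that fin by (simp add: lp_rows_def Plus_def lp_row_supply)
  ultimately show "LP_feasible A G C a r (\<lambda>i j. x (i, j))"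
    by (auto simp: LP_feasible_def admissible_for_def nonneg_alloc_def supply_respecting_def CC_def)
qed (use fin in \<open>auto simp: lp_rows_def Plus_def lp_row_demand lp_row_sign lp_row_supply
      LP_feasible_def admissible_for_def nonneg_alloc_def supply_respecting_def CC_def\<close>)

lemma LP_obj_as_sum:
  "LP_obj A G d lam (\<lambda>i j. x (i, j)) = (\<Sum>v\<in>A \<times> G. (case v of (i, j) \<Rightarrow> lam i * d i j) * x v)"
  unfolding LP_obj_def sum.cartesian_product' by (simp add: sum_distrib_left mult.assoc)

lemma DLP_feasible_near_LP_optimum:
  assumes fin: "finite A" "finite G" "finite C" and opt: "LP_optimal A G C a r d lam X" and eps: "\<epsilon> > 0"
  shows "\<exists>\<beta> q. DLP_feasible A G C a d lam \<beta> q \<and> DLP_obj A G C r \<beta> q > LP_obj A G d lam X - \<epsilon>"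
proof -
  let ?L = "lp_rows A G C"
  have x0: "\<forall>l\<in>?L. (\<Sum>v\<in>A \<times> G. lp_coeff a l v * (\<lambda>(i, j). X i j) v) \<ge> lp_rhs r l"
    using lp_system_iff_LP_feasible[OF fin, where x = "\<lambda>(i, j). X i j"] opt unfolding LP_optimal_def by simp
  have bound: "(\<Sum>v\<in>A \<times> G. (case v of (i, j) \<Rightarrow> lam i * d i j) * x v) \<ge> LP_obj A G d lam X"
    if "\<forall>l\<in>?L. (\<Sum>v\<in>A \<times> G. lp_coeff a l v * x v) \<ge> lp_rhs r l" for x
    using that opt unfolding lp_system_iff_LP_feasible[OF fin] LP_optimal_def LP_obj_as_sum[symmetric]
    by blast
  obtain y where y: "\<forall>l\<in>?L. y l \<ge> 0"
      "\<forall>v\<in>A \<times> G. (\<Sum>l\<in>?L. y l * lp_coeff a l v) = (case v of (i, j) \<Rightarrow> lam i * d i j)"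
      "(\<Sum>l\<in>?L. y l * lp_rhs r l) > LP_obj A G d lam X - \<epsilon>"
    using lower_bound_certificate[OF _ _ x0 bound eps] fin by (auto simp: lp_rows_def)
  define \<beta> where "\<beta> i k = y (Inl (i, k))" for i k
  define q where "q j = y (Inr (Inr j))" for j
  have "DLP_feasible A G C a d lam \<beta> q"
    unfolding DLP_feasible_def
  proof (intro conjI ballI)
    fix i j assume ij: "i \<in> A" "j \<in> G"
    have "(\<Sum>k\<in>C. y (Inl (i, k)) * a i j k) + y (Inr (Inl (i, j))) - y (Inr (Inr j)) = lam i * d i j"
      using y(2) ij lp_coeff_column[OF fin ij, of y a] by auto
    moreover have "y (Inr (Inl (i, j))) \<ge> 0" using y(1) ij by (auto simp: lp_rows_def Plus_def)
    ultimately show "lam i * d i j \<ge> (\<Sum>k\<in>C. a i j k * \<beta> i k) - q j"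
      unfolding \<beta>_def q_def by (simp add: mult.commute)
  next
    fix i k assume "i \<in> A" "k \<in> C"
    then show "\<beta> i k \<ge> 0" using y(1) unfolding \<beta>_def by (auto simp: lp_rows_def Plus_def)
  next
    fix j assume "j \<in> G"
    then show "q j \<ge> 0" using y(1) unfolding q_def by (auto simp: lp_rows_def Plus_def)
  qed
  moreover have "DLP_obj A G C r \<beta> q = (\<Sum>l\<in>?L. y l * lp_rhs r l)"
    unfolding lp_rhs_combination[OF fin] DLP_obj_def \<beta>_def q_def ..
  ultimately show ?thesis using y(3) by (intro exI[of _ \<beta>] exI[of _ q]) simp
qed

text \<open>Farkas' lemma only yields dual solutions that are \<open>\<epsilon>\<close>-close to the primal optimum,
  which is enough to compare with an optimal dual solution.\<close>
lemma LP_obj_le_DLP_obj: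
  assumes fin: "finite A" "finite G" "finite C" and opt: "LP_optimal A G C a r d lam X"
    and dopt: "DLP_optimal A G C a r d lam \<alpha> p"
  shows "LP_obj A G d lam X \<le> DLP_obj A G C r \<alpha> p"
proof (rule field_le_epsilon)
  fix \<epsilon> :: real assume "\<epsilon> > 0"
  from DLP_feasible_near_LP_optimum[OF fin opt this] obtain \<beta> q where
    "DLP_feasible A G C a d lam \<beta> q" "DLP_obj A G C r \<beta> q > LP_obj A G d lam X - \<epsilon>" by blast
  with dopt show "LP_obj A G d lam X \<le> DLP_obj A G C r \<alpha> p + \<epsilon>"
    unfolding DLP_optimal_def by force
qed

definition agent_slack :: "'g set \<Rightarrow> 'c set \<Rightarrow> ('a \<Rightarrow> 'g \<Rightarrow> 'c \<Rightarrow> real) \<Rightarrow> ('a \<Rightarrow> 'c \<Rightarrow> real)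
    \<Rightarrow> ('a \<Rightarrow> 'g \<Rightarrow> real) \<Rightarrow> ('a \<Rightarrow> real) \<Rightarrow> ('a \<Rightarrow> 'c \<Rightarrow> real) \<Rightarrow> ('g \<Rightarrow> real)
    \<Rightarrow> ('a \<Rightarrow> 'g \<Rightarrow> real) \<Rightarrow> 'a \<Rightarrow> real" where
  "agent_slack G C a r d lam \<alpha> p X i =
     (\<Sum>j\<in>G. X i j * (lam i * d i j - (\<Sum>k\<in>C. a i j k * \<alpha> i k) + p j)) +
     (\<Sum>k\<in>C. \<alpha> i k * ((\<Sum>j\<in>G. a i j k * X i j) - r i k))"

lemma agent_slack_eq:
  "agent_slack G C a r d lam \<alpha> p X i =
     lam i * (\<Sum>j\<in>G. d i j * X i j) - (\<Sum>k\<in>C. r i k * \<alpha> i k) + (\<Sum>j\<in>G. p j * X i j)"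
proof -
  have "(\<Sum>j\<in>G. X i j * (\<Sum>k\<in>C. a i j k * \<alpha> i k)) = (\<Sum>k\<in>C. \<alpha> i k * (\<Sum>j\<in>G. a i j k * X i j))"
    by (simp add: sum_distrib_left mult_ac sum.swap[of _ G])
  then show ?thesis
    unfolding agent_slack_def
    by (simp add: algebra_simps sum.distrib sum_subtractf sum_distrib_left)
qed

lemma agent_slack_nonneg:
  assumes X: "LP_feasible A G C a r X" and dual: "DLP_feasible A G C a d lam \<alpha> p" and i: "i \<in> A"
  shows "agent_slack G C a r d lam \<alpha> p X i \<ge> 0"
proof -
  have "X i j * (lam i * d i j - (\<Sum>k\<in>C. a i j k * \<alpha> i k) + p j) \<ge> 0" if "j \<in> G" for j
    using X dual i that unfolding LP_feasible_def admissible_for_def nonneg_alloc_def DLP_feasible_def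
    by (intro mult_nonneg_nonneg) force+
  moreover have "\<alpha> i k * ((\<Sum>j\<in>G. a i j k * X i j) - r i k) \<ge> 0" if "k \<in> C" for k
    using X dual i that unfolding LP_feasible_def admissible_for_def CC_def DLP_feasible_def
    by (intro mult_nonneg_nonneg) force+
  ultimately show ?thesis
    unfolding agent_slack_def by (intro add_nonneg_nonneg sum_nonneg) auto
qed

lemma LP_obj_minus_DLP_obj:
  "LP_obj A G d lam X - DLP_obj A G C r \<alpha> p =
     (\<Sum>i\<in>A. agent_slack G C a r d lam \<alpha> p X i) + (\<Sum>j\<in>G. p j * (1 - (\<Sum>i\<in>A. X i j)))"
  unfolding agent_slack_eq LP_obj_def DLP_obj_def
  by (simp add: algebra_simps sum.distrib sum_subtractf sum_distrib_left sum.swap[of _ A])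

lemma complementary_slackness:
  assumes fin: "finite A" "finite G" "finite C" and opt: "LP_optimal A G C a r d lam X"
    and dopt: "DLP_optimal A G C a r d lam \<alpha> p" and i: "i \<in> A"
  shows "(\<Sum>j\<in>G. p j * X i j) = (\<Sum>k\<in>C. r i k * \<alpha> i k) - lam i * (\<Sum>j\<in>G. d i j * X i j)"
proof -
  have feas: "LP_feasible A G C a r X" "DLP_feasible A G C a d lam \<alpha> p"
    using opt dopt unfolding LP_optimal_def DLP_optimal_def by auto
  have slack: "\<forall>i\<in>A. agent_slack G C a r d lam \<alpha> p X i \<ge> 0"
    using agent_slack_nonneg[OF feas] by blast
  have "(\<Sum>j\<in>G. p j * (1 - (\<Sum>i\<in>A. X i j))) \<ge> 0"
    using feas unfolding LP_feasible_def admissible_for_def supply_respecting_def DLP_feasible_def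
    by (intro sum_nonneg mult_nonneg_nonneg) auto
  with LP_obj_le_DLP_obj[OF fin opt dopt] LP_obj_minus_DLP_obj[of A G d lam X C r \<alpha> p a]
  have "(\<Sum>i\<in>A. agent_slack G C a r d lam \<alpha> p X i) \<le> 0" by linarith
  with slack have "agent_slack G C a r d lam \<alpha> p X i = 0"
    using sum_nonneg_eq_0_iff[OF fin(1)] sum_nonneg[of A] i by (metis antisym)
  then show ?thesis unfolding agent_slack_eq by simp
qed

lemma sum_weighted_shift:
  fixes lam E :: "'a \<Rightarrow> real"
  assumes "finite A" "\<forall>i\<in>A. m \<le> lam i"
  shows "(\<Sum>i\<in>A. lam i * E i) = m * (\<Sum>i\<in>A. E i) + (\<Sum>i\<in>{i\<in>A. m < lam i}. (lam i - m) * E i)"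
proof -
  have "(\<Sum>i\<in>A. lam i * E i) = m * (\<Sum>i\<in>A. E i) + (\<Sum>i\<in>A. (lam i - m) * E i)"
    by (simp add: algebra_simps sum.distrib sum_distrib_left sum_subtractf)
  also have "(\<Sum>i\<in>A. (lam i - m) * E i) = (\<Sum>i\<in>{i\<in>A. m < lam i}. (lam i - m) * E i)"
    using assms by (intro sum.mono_neutral_right) force+
  finally show ?thesis .
qed

lemma level_set_shift:
  fixes lam :: "'a \<Rightarrow> real"
  assumes "m < t"
  shows "{i\<in>{i\<in>A. m < lam i}. t - m \<le> lam i - m} = {i\<in>A. t \<le> lam i}"
  using assms by auto

text \<open>Abel summation, by induction on \<open>card A\<close> peeling off the smallest weight.\<close>
lemma weighted_sum_pos_of_upper_sums_nonneg:
  fixes lam E :: "'a \<Rightarrow> real"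
  assumes "finite A" "\<forall>i\<in>A. lam i > 0" "\<forall>t\<in>lam ` A. (\<Sum>i\<in>{i\<in>A. t \<le> lam i}. E i) \<ge> 0"
  shows "(\<Sum>i\<in>A. lam i * E i) \<ge> 0 \<and>
    ((\<exists>t\<in>lam ` A. (\<Sum>i\<in>{i\<in>A. t \<le> lam i}. E i) > 0) \<longrightarrow> (\<Sum>i\<in>A. lam i * E i) > 0)"
  using assms
proof (induction "card A" arbitrary: A lam rule: less_induct)
  case less
  show ?case
  proof (cases "A = {}")
    case False
    define m where "m = Min (lam ` A)"
    have m_in: "m \<in> lam ` A" and m_le: "\<forall>i\<in>A. m \<le> lam i"
      using False less.prems(1) by (auto simp: m_def)
    have "m > 0" using m_in less.prems(2) by auto
    define A' where "A' = {i\<in>A. m < lam i}"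
    define lam' where "lam' i = lam i - m" for i
    have shifted_values: "lam' ` A' = (\<lambda>t. t - m) ` {t\<in>lam ` A. m < t}"
      unfolding A'_def lam'_def by auto
    have "card A' < card A"
      using m_in less.prems(1) unfolding A'_def by (intro psubset_card_mono) auto
    moreover have "\<forall>t\<in>lam' ` A'. (\<Sum>i\<in>{i\<in>A'. t \<le> lam' i}. E i) \<ge> 0"
    proof (unfold shifted_values, intro ballI)
      fix t assume "t \<in> (\<lambda>t. t - m) ` {t\<in>lam ` A. m < t}"
      then obtain s where "s \<in> lam ` A" "m < s" "t = s - m" by blast
      with less.prems(3) show "(\<Sum>i\<in>{i\<in>A'. t \<le> lam' i}. E i) \<ge> 0"
        unfolding \<open>t = s - m\<close> A'_def lam'_def level_set_shift[OF \<open>m < s\<close>] by blast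
    qed
    ultimately have IH: "(\<Sum>i\<in>A'. lam' i * E i) \<ge> 0 \<and>
      ((\<exists>t\<in>lam' ` A'. (\<Sum>i\<in>{i\<in>A'. t \<le> lam' i}. E i) > 0) \<longrightarrow> (\<Sum>i\<in>A'. lam' i * E i) > 0)"
      using less.hyps[of A' lam'] less.prems(1) unfolding A'_def lam'_def by auto
    have all: "{i\<in>A. m \<le> lam i} = A" using m_le by auto
    have "(\<Sum>i\<in>A. E i) \<ge> 0" using less.prems(3) m_in all by force
    have split: "(\<Sum>i\<in>A. lam i * E i) = m * (\<Sum>i\<in>A. E i) + (\<Sum>i\<in>A'. lam' i * E i)"
      using sum_weighted_shift[OF less.prems(1) m_le] unfolding A'_def lam'_def .
    have "(\<Sum>i\<in>A. lam i * E i) > 0" if "t \<in> lam ` A" "(\<Sum>i\<in>{i\<in>A. t \<le> lam i}. E i) > 0" for t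
    proof (cases "t = m")
      case True
      with that all have "(\<Sum>i\<in>A. E i) > 0" by simp
      with IH \<open>m > 0\<close> show ?thesis unfolding split by (simp add: add_pos_nonneg)
    next
      case False
      with that m_le have "m < t" by force
      with that have "t - m \<in> lam' ` A'" "(\<Sum>i\<in>{i\<in>A'. t - m \<le> lam' i}. E i) > 0"
        unfolding shifted_values unfolding A'_def lam'_def level_set_shift[OF \<open>m < t\<close>] by auto
      with IH have "(\<Sum>i\<in>A'. lam' i * E i) > 0" by blast
      with \<open>(\<Sum>i\<in>A. E i) \<ge> 0\<close> \<open>m > 0\<close> show ?thesis unfolding split by (simp add: add_nonneg_pos)
    qed
    with IH \<open>(\<Sum>i\<in>A. E i) \<ge> 0\<close> \<open>m > 0\<close> show ?thesis unfolding split by auto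
  qed simp
qed

lemma jointly_optimal_empty: "jointly_optimal A G C a r d {} (\<lambda>_ _. 0)"
  unfolding jointly_optimal_def admissible_for_def nonneg_alloc_def supply_respecting_def delay_def
  by auto

lemma admissible_for_subset:
  "S' \<subseteq> S \<Longrightarrow> admissible_for A G C a r S X \<Longrightarrow> admissible_for A G C a r S' X"
  unfolding admissible_for_def by auto

lemma jointly_optimal_delay_eq:
  "jointly_optimal A G C a r d S X \<Longrightarrow> jointly_optimal A G C a r d S Y \<Longrightarrow> delay G d S X = delay G d S Y"
  unfolding jointly_optimal_def by (meson antisym)

lemma jointly_optimal_same_delay:
  "jointly_optimal A G C a r d S X \<Longrightarrow> admissible_for A G C a r S Y \<Longrightarrow> delay G d S Y = delay G d S X
    \<Longrightarrow> jointly_optimal A G C a r d S Y"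
  unfolding jointly_optimal_def by simp

lemma jointly_optimal_restrict:
  assumes Y: "jointly_optimal A G C a r d S Y" and Y': "jointly_optimal A G C a r d S' Y'" and "S \<subseteq> S'"
    and same: "\<forall>i\<in>S. (\<Sum>j\<in>G. d i j * Y' i j) = (\<Sum>j\<in>G. d i j * Y i j)"
  shows "jointly_optimal A G C a r d S Y'"
proof (rule jointly_optimal_same_delay[OF Y])
  show "admissible_for A G C a r S Y'"
    using Y' \<open>S \<subseteq> S'\<close> admissible_for_subset unfolding jointly_optimal_def by blast
  show "delay G d S Y' = delay G d S Y"
    unfolding delay_def by (rule sum.cong[OF refl]) (use same in blast)
qed

lemma extensibility_greedy_prefix:
  fixes lam :: "'a \<Rightarrow> real"
  assumes fin: "finite A" and ext: "extensibility A G C a r d" and n: "n \<le> card A"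
  shows "\<exists>U Y. U \<subseteq> A \<and> card U = n \<and> (\<forall>j\<in>U. \<forall>k\<in>A - U. lam k \<le> lam j) \<and>
      jointly_optimal A G C a r d U Y \<and>
      (\<forall>t. {i\<in>A. t \<le> lam i} \<subseteq> U \<longrightarrow> jointly_optimal A G C a r d {i\<in>A. t \<le> lam i} Y)"
  using n
proof (induction n)
  case 0
  have "jointly_optimal A G C a r d {i\<in>A. t \<le> lam i} (\<lambda>_ _. 0)" if "{i\<in>A. t \<le> lam i} \<subseteq> {}" for t
  proof -
    from that have empty: "{i\<in>A. t \<le> lam i} = {}" by blast
    show ?thesis unfolding empty by (rule jointly_optimal_empty)
  qed
  then show ?case
    by (intro exI[of _ "{}"] exI[of _ "\<lambda>_ _. 0"]) (simp add: jointly_optimal_empty)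
next
  case (Suc n)
  then obtain U Y where U: "U \<subseteq> A" "card U = n" "\<forall>j\<in>U. \<forall>k\<in>A - U. lam k \<le> lam j"
    "jointly_optimal A G C a r d U Y"
    "\<forall>t. {i\<in>A. t \<le> lam i} \<subseteq> U \<longrightarrow> jointly_optimal A G C a r d {i\<in>A. t \<le> lam i} Y"
    by auto
  with Suc.prems have "U \<subset> A" by auto
  then have "A - U \<noteq> {}" "finite (A - U)" using fin by auto
  then have "Max (lam ` (A - U)) \<in> lam ` (A - U)" by simp
  then obtain i where i: "i \<in> A - U" "lam i = Max (lam ` (A - U))" by auto
  with \<open>finite (A - U)\<close> have i_max: "\<forall>k\<in>A - U. lam k \<le> lam i" by simp
  from ext[unfolded extensibility_def, rule_format, OF \<open>U \<subset> A\<close> U(4) i(1)] obtain Y' where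
    Y': "jointly_optimal A G C a r d (insert i U) Y'"
      "\<forall>i'\<in>U. (\<Sum>j\<in>G. d i' j * Y' i' j) = (\<Sum>j\<in>G. d i' j * Y i' j)"
    by blast
  have "jointly_optimal A G C a r d {i\<in>A. t \<le> lam i} Y'" if T: "{i\<in>A. t \<le> lam i} \<subseteq> insert i U" for t
  proof (cases "t \<le> lam i")
    case True
    with U(1,3) i i_max have "U \<subseteq> {i\<in>A. t \<le> lam i}" by force
    with T i True have "{i\<in>A. t \<le> lam i} = insert i U" by auto
    then show ?thesis using Y'(1) by (simp only:)
  next
    case False
    then have TU: "{i\<in>A. t \<le> lam i} \<subseteq> U" using T by auto
    with Y'(2) have "\<forall>i'\<in>{i\<in>A. t \<le> lam i}. (\<Sum>j\<in>G. d i' j * Y' i' j) = (\<Sum>j\<in>G. d i' j * Y i' j)"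
      by blast
    with TU show ?thesis by (intro jointly_optimal_restrict[OF U(5)[rule_format, OF TU] Y'(1)]) auto
  qed
  moreover have "card (insert i U) = Suc n" using U(1,2) i fin by (simp add: finite_subset)
  moreover have "insert i U \<subseteq> A" "\<forall>j\<in>insert i U. \<forall>k\<in>A - insert i U. lam k \<le> lam j"
    using U(1,3) i i_max by auto
  ultimately show ?case using Y'(1) by (intro exI[of _ "insert i U"] exI[of _ Y']) blast
qed

lemma extensibility_imp_feasible_jointly_optimal_levels:
  fixes lam :: "'a \<Rightarrow> real"
  assumes fin: "finite A" and ext: "extensibility A G C a r d"
  shows "\<exists>Y. LP_feasible A G C a r Y \<and> (\<forall>t. jointly_optimal A G C a r d {i\<in>A. t \<le> lam i} Y)"
proof -
  obtain U Y where U: "U \<subseteq> A" "card U = card A" "jointly_optimal A G C a r d U Y"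
    "\<forall>t. {i\<in>A. t \<le> lam i} \<subseteq> U \<longrightarrow> jointly_optimal A G C a r d {i\<in>A. t \<le> lam i} Y"
    using extensibility_greedy_prefix[OF fin ext order_refl, of lam] by (elim exE conjE) (rule that)
  have "U = A" using card_subset_eq[OF fin U(1,2)] .
  with U(3) have "LP_feasible A G C a r Y" unfolding jointly_optimal_def LP_feasible_def by simp
  with U(4) \<open>U = A\<close> show ?thesis by auto
qed

lemma LP_optimal_imp_jointly_optimal_levels:
  assumes fin: "finite A" and ext: "extensibility A G C a r d"
    and lam_pos: "\<forall>i\<in>A. lam i > 0" and opt: "LP_optimal A G C a r d lam X" and t: "t \<in> lam ` A"
  shows "jointly_optimal A G C a r d {i\<in>A. t \<le> lam i} X"
proof -
  obtain Y where Y: "LP_feasible A G C a r Y" "\<forall>t. jointly_optimal A G C a r d {i\<in>A. t \<le> lam i} Y"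
    using extensibility_imp_feasible_jointly_optimal_levels[OF fin ext, of lam] by (elim exE conjE) (rule that)
  define E where "E i = (\<Sum>j\<in>G. d i j * X i j) - (\<Sum>j\<in>G. d i j * Y i j)" for i
  have adm: "admissible_for A G C a r {i\<in>A. t \<le> lam i} X" for t
    by (rule admissible_for_subset[of _ A]) (use opt in \<open>auto simp: LP_optimal_def LP_feasible_def\<close>)
  have upper_sum: "(\<Sum>i\<in>{i\<in>A. t \<le> lam i}. E i) =
      delay G d {i\<in>A. t \<le> lam i} X - delay G d {i\<in>A. t \<le> lam i} Y" for t
    unfolding E_def delay_def by (simp add: sum_subtractf)
  have upper_nonneg: "(\<Sum>i\<in>{i\<in>A. t \<le> lam i}. E i) \<ge> 0" for t
    using Y(2) adm unfolding upper_sum jointly_optimal_def by simp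
  have "(\<Sum>i\<in>A. lam i * E i) = LP_obj A G d lam X - LP_obj A G d lam Y"
    unfolding E_def LP_obj_def by (simp add: sum_subtractf right_diff_distrib)
  also have "\<dots> \<le> 0" using opt Y(1) unfolding LP_optimal_def by simp
  finally have "\<not> (\<Sum>i\<in>{i\<in>A. t \<le> lam i}. E i) > 0"
    using weighted_sum_pos_of_upper_sums_nonneg[OF fin lam_pos, of E] upper_nonneg t by auto
  with upper_nonneg[of t] have "delay G d {i\<in>A. t \<le> lam i} X = delay G d {i\<in>A. t \<le> lam i} Y"
    unfolding upper_sum by simp
  then show ?thesis by (intro jointly_optimal_same_delay[OF Y(2)[rule_format] adm])
qed

lemma class_value_strict_mono:
  assumes "finite A" "1 \<le> g" "g < q" "q \<le> num_classes A lam"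
  shows "class_value A lam g < class_value A lam q"
  using assms unfolding class_value_def num_classes_def
  by (intro sorted_wrt_nth_less[OF strict_sorted_list_of_set]) auto

lemma class_value_le_iff:
  assumes "finite A" "g \<in> {1..num_classes A lam}" "q \<in> {1..num_classes A lam}"
  shows "class_value A lam g \<le> class_value A lam q \<longleftrightarrow> g \<le> q"
  using assms class_value_strict_mono[of A g q lam] class_value_strict_mono[of A q g lam]
  by (cases g q rule: linorder_cases) auto

lemma class_value_in_image:
  assumes "finite A" "g \<in> {1..num_classes A lam}"
  shows "class_value A lam g \<in> lam ` A"
proof -
  have "g - 1 < length (sorted_list_of_set (lam ` A))"
    using assms unfolding num_classes_def by auto
  then have "class_value A lam g \<in> set (sorted_list_of_set (lam ` A))"
    unfolding class_value_def by (rule nth_mem)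
  with assms(1) show ?thesis by simp
qed

lemma ex_class_value_eq:
  assumes "finite A" "i \<in> A"
  shows "\<exists>q\<in>{1..num_classes A lam}. lam i = class_value A lam q"
proof -
  have "lam i \<in> set (sorted_list_of_set (lam ` A))" using assms by simp
  then obtain n where "n < length (sorted_list_of_set (lam ` A))" "sorted_list_of_set (lam ` A) ! n = lam i"
    by (auto simp: in_set_conv_nth)
  then show ?thesis unfolding num_classes_def class_value_def
    by (intro bexI[of _ "Suc n"]) auto
qed

lemma upper_set_eq_level_set:
  assumes "finite A" "g \<in> {1..num_classes A lam}"
  shows "upper_set A lam g = {i\<in>A. class_value A lam g \<le> lam i}"
proof (intro set_eqI iffI)
  fix i assume "i \<in> upper_set A lam g"
  then obtain q where "q \<in> {g..num_classes A lam}" "i \<in> A" "lam i = class_value A lam q"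
    unfolding upper_set_def class_set_def by auto
  with class_value_le_iff[OF assms, of q] assms(2) show "i \<in> {i\<in>A. class_value A lam g \<le> lam i}"
    by auto
next
  fix i assume i: "i \<in> {i\<in>A. class_value A lam g \<le> lam i}"
  then obtain q where "q \<in> {1..num_classes A lam}" "lam i = class_value A lam q"
    using ex_class_value_eq[OF assms(1)] by blast
  with class_value_le_iff[OF assms] i show "i \<in> upper_set A lam g"
    unfolding upper_set_def class_set_def by auto
qed

lemma upper_set_eq_class_set_Un:
  assumes "finite A" "g \<in> {1..num_classes A lam}"
  shows "upper_set A lam g = class_set A lam g \<union> upper_set A lam (Suc g)"
    and "class_set A lam g \<inter> upper_set A lam (Suc g) = {}"
proof -
  have "{g..num_classes A lam} = insert g {Suc g..num_classes A lam}" using assms(2) by auto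
  then show "upper_set A lam g = class_set A lam g \<union> upper_set A lam (Suc g)"
    unfolding upper_set_def by auto
  show "class_set A lam g \<inter> upper_set A lam (Suc g) = {}"
  proof (rule ccontr)
    assume "class_set A lam g \<inter> upper_set A lam (Suc g) \<noteq> {}"
    then obtain i q where "q \<in> {Suc g..num_classes A lam}" "lam i = class_value A lam g"
      "lam i = class_value A lam q"
      unfolding upper_set_def class_set_def by blast
    with class_value_strict_mono[OF assms(1), of g q lam] assms(2) show False by auto
  qed
qed

lemma LP_optimal_imp_jointly_optimal_upper_set:
  assumes "finite A" "extensibility A G C a r d" "\<forall>i\<in>A. lam i > 0" "LP_optimal A G C a r d lam X"
    and g: "g \<in> {1..num_classes A lam}"
  shows "jointly_optimal A G C a r d (upper_set A lam g) X"
  unfolding upper_set_eq_level_set[OF assms(1) g]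
  using LP_optimal_imp_jointly_optimal_levels[OF assms(1-4) class_value_in_image[OF assms(1) g]] .

lemma LP_optimal_class_delay_eq:
  assumes fin: "finite A" and ext: "extensibility A G C a r d" and lam_pos: "\<forall>i\<in>A. lam i > 0"
    and X: "LP_optimal A G C a r d lam X" and Y: "LP_optimal A G C a r d lam Y"
    and g: "g \<in> {1..num_classes A lam}"
  shows "delay G d (class_set A lam g) X = delay G d (class_set A lam g) Y"
proof -
  have upper_eq: "delay G d (upper_set A lam q) X = delay G d (upper_set A lam q) Y" if "1 \<le> q" for q
  proof (cases "q \<le> num_classes A lam")
    case True
    with that have "q \<in> {1..num_classes A lam}" by simp
    from LP_optimal_imp_jointly_optimal_upper_set[OF fin ext lam_pos X this]
      LP_optimal_imp_jointly_optimal_upper_set[OF fin ext lam_pos Y this]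
    show ?thesis by (rule jointly_optimal_delay_eq)
  next
    case False
    then have "upper_set A lam q = {}" unfolding upper_set_def by auto
    then show ?thesis by (simp add: delay_def)
  qed
  have finite_sets: "finite (class_set A lam g)" "finite (upper_set A lam (Suc g))"
    using fin unfolding class_set_def upper_set_def by auto
  have "delay G d (upper_set A lam g) Z = delay G d (class_set A lam g) Z + delay G d (upper_set A lam (Suc g)) Z" for Z
    unfolding delay_def upper_set_eq_class_set_Un(1)[OF fin g]
    by (rule sum.union_disjoint[OF finite_sets upper_set_eq_class_set_Un(2)[OF fin g]])
  with upper_eq[of g] upper_eq[of "Suc g"] g show ?thesis by simp
qed

lemma pay_eq_dual_value_minus_delay:
  assumes fin: "finite A" "finite G" "finite C" and opt: "LP_optimal A G C a r d lam X"
    and dopt: "DLP_optimal A G C a r d lam \<alpha> p" and S: "S \<subseteq> A" and lam_S: "\<forall>i\<in>S. lam i = v"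
  shows "pay G S X p = (\<Sum>i\<in>S. \<Sum>k\<in>C. r i k * \<alpha> i k) - v * delay G d S X"
proof -
  have "pay G S X p = (\<Sum>i\<in>S. (\<Sum>k\<in>C. r i k * \<alpha> i k) - v * (\<Sum>j\<in>G. d i j * X i j))"
    unfolding pay_def using complementary_slackness[OF fin opt dopt] S lam_S by (intro sum.cong) auto
  then show ?thesis by (simp add: delay_def sum_subtractf sum_distrib_left)
qed

lemma class_pay_le_iff_delay_le:
  assumes fin: "finite A" "finite G" "finite C" and lam_pos: "\<forall>i\<in>A. lam i > 0"
    and opt: "LP_optimal A G C a r d lam X" "LP_optimal A G C a r d lam X'"
    and dopt: "DLP_optimal A G C a r d lam \<alpha> p" and g: "g \<in> {1..num_classes A lam}"
    and S: "S \<subseteq> class_set A lam g"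
  shows "pay G S X' p \<le> pay G S X p \<longleftrightarrow> delay G d S X \<le> delay G d S X'"
    and "pay G S X' p < pay G S X p \<longleftrightarrow> delay G d S X < delay G d S X'"
proof -
  have "S \<subseteq> A" "\<forall>i\<in>S. lam i = class_value A lam g" using S unfolding class_set_def by auto
  from pay_eq_dual_value_minus_delay[OF fin opt(1) dopt this]
    pay_eq_dual_value_minus_delay[OF fin opt(2) dopt this]
  have diff: "pay G S X p - pay G S X' p = class_value A lam g * (delay G d S X' - delay G d S X)"
    by (simp add: algebra_simps)
  have "class_value A lam g > 0"
    using class_value_in_image[OF fin(1) g] lam_pos by auto
  then have "0 \<le> pay G S X p - pay G S X' p \<longleftrightarrow> 0 \<le> delay G d S X' - delay G d S X"
    and "0 < pay G S X p - pay G S X' p \<longleftrightarrow> 0 < delay G d S X' - delay G d S X"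
    unfolding diff by (simp_all add: zero_le_mult_iff zero_less_mult_iff)
  then show "pay G S X' p \<le> pay G S X p \<longleftrightarrow> delay G d S X \<le> delay G d S X'"
    and "pay G S X' p < pay G S X p \<longleftrightarrow> delay G d S X < delay G d S X'"
    by simp_all
qed

theorem lemma4p2:
  fixes A :: "'a set" and G :: "'g set" and C :: "'c set"
    and a :: "'a \<Rightarrow> 'g \<Rightarrow> 'c \<Rightarrow> real" and r :: "'a \<Rightarrow> 'c \<Rightarrow> real"
    and d :: "'a \<Rightarrow> 'g \<Rightarrow> real" and m :: "'a \<Rightarrow> real" and lam :: "'a \<Rightarrow> real"
  assumes fin: "finite A" "finite G" "finite C"
    and r_nonneg: "\<forall>i\<in>A. \<forall>k\<in>C. r i k \<ge> 0"
    and d_nonneg: "\<forall>i\<in>A. \<forall>j\<in>G. d i j \<ge> 0"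
    and budgets: "\<forall>i\<in>A. m i > 0"
    and ext: "extensibility A G C a r d"
    and lam_pos: "\<forall>i\<in>A. lam i > 0"
    and feas: "\<exists>X. LP_feasible A G C a r X"
  shows
    "(\<forall>X. LP_optimal A G C a r d lam X \<longrightarrow>
          (\<forall>g\<in>{1..num_classes A lam}. jointly_optimal A G C a r d (upper_set A lam g) X))
     \<and> (\<forall>X Y. LP_optimal A G C a r d lam X \<longrightarrow> LP_optimal A G C a r d lam Y \<longrightarrow>
          (\<forall>g\<in>{1..num_classes A lam}.
             delay G d (class_set A lam g) X = delay G d (class_set A lam g) Y))
     \<and> (\<forall>\<alpha> p \<alpha>' p' g. DLP_optimal A G C a r d lam \<alpha> p \<longrightarrow> DLP_optimal A G C a r d lam \<alpha>' p' \<longrightarrow>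
          g \<in> {1..num_classes A lam} \<longrightarrow>
          (\<Sum>i\<in>class_set A lam g. \<Sum>k\<in>C. r i k * \<alpha> i k) =
          (\<Sum>i\<in>class_set A lam g. \<Sum>k\<in>C. r i k * \<alpha>' i k) \<longrightarrow>
          (\<forall>X. LP_optimal A G C a r d lam X \<longrightarrow>
             pay G (class_set A lam g) X p = pay G (class_set A lam g) X p'))
     \<and> (\<forall>X X' \<alpha> p g S. LP_optimal A G C a r d lam X \<longrightarrow> LP_optimal A G C a r d lam X' \<longrightarrow>
          DLP_optimal A G C a r d lam \<alpha> p \<longrightarrow> g \<in> {1..num_classes A lam} \<longrightarrow>
          S \<subseteq> class_set A lam g \<longrightarrow>
          delay G d S X \<le> delay G d S X' \<longrightarrow>
          pay G S X p \<ge> pay G S X' p \<and>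
          (delay G d S X < delay G d S X' \<longleftrightarrow> pay G S X p > pay G S X' p))"
proof (intro conjI allI impI ballI)
  show "jointly_optimal A G C a r d (upper_set A lam g) X"
    if "LP_optimal A G C a r d lam X" "g \<in> {1..num_classes A lam}" for X g
    using LP_optimal_imp_jointly_optimal_upper_set[OF fin(1) ext lam_pos that] .
  show "delay G d (class_set A lam g) X = delay G d (class_set A lam g) Y"
    if "LP_optimal A G C a r d lam X" "LP_optimal A G C a r d lam Y" "g \<in> {1..num_classes A lam}" for X Y g
    using LP_optimal_class_delay_eq[OF fin(1) ext lam_pos that] .
next
  fix \<alpha> p \<alpha>' p' g X
  assume dopt: "DLP_optimal A G C a r d lam \<alpha> p" "DLP_optimal A G C a r d lam \<alpha>' p'"
    and same_value: "(\<Sum>i\<in>class_set A lam g. \<Sum>k\<in>C. r i k * \<alpha> i k) =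
      (\<Sum>i\<in>class_set A lam g. \<Sum>k\<in>C. r i k * \<alpha>' i k)"
    and opt: "LP_optimal A G C a r d lam X"
  have "class_set A lam g \<subseteq> A" "\<forall>i\<in>class_set A lam g. lam i = class_value A lam g"
    unfolding class_set_def by auto
  from pay_eq_dual_value_minus_delay[OF fin opt dopt(1) this]
    pay_eq_dual_value_minus_delay[OF fin opt dopt(2) this]
  show "pay G (class_set A lam g) X p = pay G (class_set A lam g) X p'"
    using same_value by simp
next
  fix X X' \<alpha> p g S
  assume "LP_optimal A G C a r d lam X" "LP_optimal A G C a r d lam X'" "DLP_optimal A G C a r d lam \<alpha> p"
    "g \<in> {1..num_classes A lam}" "S \<subseteq> class_set A lam g"
  from class_pay_le_iff_delay_le[OF fin lam_pos this]
  show "delay G d S X \<le> delay G d S X' \<Longrightarrow> pay G S X' p \<le> pay G S X p"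
    and "delay G d S X < delay G d S X' \<longleftrightarrow> pay G S X' p < pay G S X p"
    by simp_all
qed

end
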